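(* Let ${\mathbf a}_1,\dots,{\mathbf a}_m\in\mathbb{C}^n$ and let $\mathcal{A}:\mathbb{H}^{n\times n}\to\mathbb{R}^m$, $\mathcal{A}(X)=({\mathbf a}_1^*X{\mathbf a}_1,\dots,{\mathbf a}_m^*X{\mathbf a}_m)$. Let $k\ge1$ and $a>0$ be such that $ak$ is a positive integer, and suppose $\mathcal{A}$ satisfies the restricted isometry property of order $(2,2ak)$ with constants $c,C>0$ satisfying \[ c-\frac{4C}{\sqrt a}-\frac{C}{a}>0 . \] Let ${\mathbf x}_0\in\mathbb{C}^n$ be nonzero with $\|{\mathbf x}_0\|_0\le k$, let $\epsilon\ge 0$, and let ${\mathbf y}=\mathcal{A}({\mathbf x}_0{\mathbf x}_0^* )+{\mathbf w}$ with ${\mathbf w}\in\mathbb{R}^m$, $\|{\mathbf w}\|_2\le\epsilon$. Let ${\mathbf x}^\#$ be any solution of \[ \min_{{\mathbf x}\in\mathbb{C}^n}\|{\mathbf x}\|_1\quad\text{s.t.}\quad \|\mathcal{A}({\mathbf x}{\mathbf x}^* )-{\mathbf y}\|_2\le\epsilon . \] Then, with \[ C_1=\frac{\frac1a+\frac{4}{\sqrt a}+1}{c-\frac{4C}{\sqrt a}-\frac{C}{a}}, \] we have \[ \|{\mathbf x}^\#({\mathbf x}^\#)^*-{\mathbf x}_0{\mathbf x}_0^*\|_F\le C_1\frac{2\epsilon}{\sqrt m}, \] and \[ \min_{\gamma\in\mathbb{C},|\gamma|=1}\|\gamma{\mathbf x}^\#-{\mathbf x}_0\|_2\le\min\Big\{\frac{2\sqrt2\,C_1\,\epsilon}{\sqrt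 m\,\|{\mathbf x}_0\|_2},\; 2\sqrt{2\sqrt2\,C_1}\,\sqrt{\epsilon}\,(n/m)^{1/4}\Big\}. \]
   Context: $\mathbb{H}^{n\times n}$ denotes the set of $n\times n$ complex Hermitian matrices. $\|{\mathbf x}\|_0$ is the number of nonzero entries of ${\mathbf x}$. $\|X\|_{0,2}$ denotes the number of nonzero rows of $X$. $\|X\|_F$ is the Frobenius norm. A linear map $\mathcal{A}:\mathbb{H}^{n\times n}\to\mathbb{R}^m$ satisfies the restricted isometry property of order $(r,k)$ with constants $0<c\le C$ if $c\|X\|_F\le \frac1m\|\mathcal{A}(X)\|_1\le C\|X\|_F$ for all $X\in\mathbb{H}^{n\times n}$ with $\operatorname{rank}(X)\le r$ and $\|X\|_{0,2}\le k$. *)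

theory Defs
  imports "HOL-Analysis.Analysis"
begin

definition hermitian :: "complex^'n^'n \<Rightarrow> bool" where
  "hermitian X \<longleftrightarrow> (\<forall>i j. X $ i $ j = cnj (X $ j $ i))"

(* the measurement map A(X) = (a_i^* X a_i)_i ; real-valued on Hermitian X *)
definition meas :: "('m \<Rightarrow> complex^'n) \<Rightarrow> complex^'n^'n \<Rightarrow> real^'m" where
  "meas a X = (\<chi> i. Re (\<Sum>j\<in>UNIV. cnj (a i $ j) * (X *v a i) $ j))"

definition outer :: "complex^'n \<Rightarrow> complex^'n^'n" where
  "outer x = (\<chi> i j. x $ i * cnj (x $ j))"

definition frob :: "complex^'n^'n \<Rightarrow> real" where
  "frob X = sqrt (\<Sum>i\<in>UNIV. \<Sum>j\<in>UNIV. (cmod (X $ i $ j))\<^sup>2)"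

definition nzrows :: "complex^'n^'n \<Rightarrow> nat" where
  "nzrows X = card {i. \<exists>j. X $ i $ j \<noteq> 0}"

definition l0 :: "complex^'n \<Rightarrow> nat" where
  "l0 x = card {i. x $ i \<noteq> 0}"

definition l1 :: "complex^'n \<Rightarrow> real" where
  "l1 x = (\<Sum>i\<in>UNIV. cmod (x $ i))"

definition l1m :: "real^'m \<Rightarrow> real" where
  "l1m v = (\<Sum>i\<in>UNIV. \<bar>v $ i\<bar>)"

definition RIP :: "('m::finite \<Rightarrow> complex^'n::finite) \<Rightarrow> nat \<Rightarrow> real \<Rightarrow> real \<Rightarrow> real \<Rightarrow> bool" where
  "RIP a r k c C \<longleftrightarrow> 0 < c \<and> c \<le> C \<and>
     (\<forall>X. hermitian X \<and> rank X \<le> r \<and> real (nzrows X) \<le> k \<longrightarrow>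
        c * frob X \<le> l1m (meas a X) / real CARD('m) \<and>
        l1m (meas a X) / real CARD('m) \<le> C * frob X)"

end

theory Submission
  imports Defs
begin

text \<open>Let \<open>H = x\<^sup># x\<^sup>#\<^sup>* - x\<^sub>0 x\<^sub>0\<^sup>*\<close> and let \<open>T\<close> be the support of \<open>x\<^sub>0\<close>.
  Sort the coordinates of \<open>x\<^sup>#\<close> outside \<open>T\<close> by decreasing modulus and cut them into blocks of
  size \<open>K = \<alpha>k\<close>. Since \<open>x\<^sub>0\<close> is feasible, \<open>\<parallel>x\<^sup>#\<parallel>\<^sub>1 \<le> \<parallel>x\<^sub>0\<parallel>\<^sub>1\<close>, so the \<open>\<ell>\<^sub>1\<close> mass of \<open>x\<^sup>#\<close> off \<open>T\<close> is
  controlled by the error \<open>F\<close> of the head (the part of \<open>x\<^sup>#\<close> on \<open>T\<close> and the first block), and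
  by the sorting the \<open>\<ell>\<^sub>2\<close> norms of the later blocks are controlled by that \<open>\<ell>\<^sub>1\<close> mass. Hence
  all remaining terms of \<open>H\<close> have total norm at most \<open>(4/\<surd>\<alpha> + 1/\<alpha>) F\<close>. Each of them is a
  Hermitian matrix of rank two supported on two blocks, so the RIP bounds their images from above
  and the image of the head error from below: \<open>c F \<le> \<parallel>\<A>(H)\<parallel>\<^sub>1/m + C (4/\<surd>\<alpha> + 1/\<alpha>) F\<close>, and
  \<open>\<parallel>\<A>(H)\<parallel>\<^sub>1 \<le> 2\<epsilon>\<surd>m\<close>. Finally, rotating \<open>x\<^sup>#\<close> by the phase of \<open>\<langle>x\<^sup>#, x\<^sub>0\<rangle>\<close> turns the bound on
  \<open>\<parallel>H\<parallel>\<^sub>F\<close> into the two bounds on the distance up to a global phase.\<close>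

section \<open>Outer products\<close>

definition outer2 :: "complex^'n \<Rightarrow> complex^'n \<Rightarrow> complex^'n^'n" where
  "outer2 v w = (\<chi> i j. v$i * cnj (w$j))"

definition outer2_sym :: "complex^'n \<Rightarrow> complex^'n \<Rightarrow> complex^'n^'n" where
  "outer2_sym v w = outer2 v w + outer2 w v"

lemma outer_eq_outer2: "outer x = outer2 x x"
  by (simp add: outer_def outer2_def)

lemma outer2_add_left: "outer2 (v + v') w = outer2 v w + outer2 v' w"
  and outer2_add_right: "outer2 v (w + w') = outer2 v w + outer2 v w'"
  by (simp_all add: outer2_def vec_eq_iff algebra_simps)

lemma outer2_sum_left: "outer2 (sum f S) w = (\<Sum>s\<in>S. outer2 (f s) w)"
  by (induction S rule: infinite_finite_induct)
    (simp_all add: outer2_add_left, simp_all add: outer2_def vec_eq_iff)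

lemma outer2_sum_right: "outer2 w (sum f S) = (\<Sum>s\<in>S. outer2 w (f s))"
  by (induction S rule: infinite_finite_induct)
    (simp_all add: outer2_add_right, simp_all add: outer2_def vec_eq_iff)

lemma outer2_sym_add_left: "outer2_sym (v + v') w = outer2_sym v w + outer2_sym v' w"
  by (simp add: outer2_sym_def outer2_add_left outer2_add_right)

lemma outer2_sym_sum_right: "outer2_sym v (sum f S) = (\<Sum>s\<in>S. outer2_sym v (f s))"
  by (simp add: outer2_sym_def outer2_sum_left outer2_sum_right sum.distrib)

lemma outer_add: "outer (v + w) = outer v + outer2_sym v w + outer w"
  by (simp add: outer_eq_outer2 outer2_sym_def outer2_add_left outer2_add_right algebra_simps)

lemma outer_sum_double:
  "outer (sum f S) + outer (sum f S) = (\<Sum>i\<in>S. \<Sum>j\<in>S. outer2_sym (f i) (f j))"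
proof -
  have swapped: "outer (sum f S) = (\<Sum>i\<in>S. \<Sum>j\<in>S. outer2 (f j) (f i))"
    by (simp add: outer_eq_outer2 outer2_sum_left outer2_sum_right)
  also have "\<dots> = (\<Sum>i\<in>S. \<Sum>j\<in>S. outer2 (f i) (f j))"
    by (rule sum.swap)
  finally show ?thesis
    by (subst (1) swapped) (simp add: outer2_sym_def sum.distrib)
qed

lemma norm_vec_power2: "(norm (x::'a::real_normed_vector^'n))\<^sup>2 = (\<Sum>i\<in>UNIV. (norm (x$i))\<^sup>2)"
  unfolding norm_vec_def L2_set_def by (simp add: sum_nonneg)

lemma frob_eq_norm: "frob X = norm X"
proof -
  have "(norm X)\<^sup>2 = (\<Sum>i\<in>UNIV. \<Sum>j\<in>UNIV. (cmod (X $ i $ j))\<^sup>2)"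
    by (simp add: norm_vec_power2)
  then show ?thesis
    unfolding frob_def by (metis norm_ge_zero real_sqrt_unique)
qed

lemma norm_outer2: "norm (outer2 v w) = norm v * norm w"
proof -
  have "(norm (outer2 v w))\<^sup>2 = (\<Sum>i\<in>UNIV. \<Sum>j\<in>UNIV. (cmod (v$i))\<^sup>2 * (cmod (w$j))\<^sup>2)"
    by (simp add: norm_vec_power2 outer2_def norm_mult power_mult_distrib)
  also have "\<dots> = (norm v)\<^sup>2 * (norm w)\<^sup>2"
    by (simp add: norm_vec_power2 sum_product)
  finally have "(norm (outer2 v w))\<^sup>2 = (norm v)\<^sup>2 * (norm w)\<^sup>2" .
  then show ?thesis
    by (simp add: power_mult_distrib[symmetric] power2_eq_iff_nonneg)
qed

lemma norm_outer2_sym_disjoint: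
  assumes "\<And>i. v$i = 0 \<or> w$i = 0"
  shows "norm (outer2_sym v w) = sqrt 2 * (norm v * norm w)"
proof -
  have entry: "(cmod (v$i * cnj (w$j) + w$i * cnj (v$j)))\<^sup>2
      = (cmod (v$i))\<^sup>2 * (cmod (w$j))\<^sup>2 + (cmod (w$i))\<^sup>2 * (cmod (v$j))\<^sup>2" for i j
    using assms[of i] by (auto simp: norm_mult power_mult_distrib)
  have "(norm (outer2_sym v w))\<^sup>2 = (\<Sum>i\<in>UNIV. \<Sum>j\<in>UNIV.
      (cmod (v$i))\<^sup>2 * (cmod (w$j))\<^sup>2 + (cmod (w$i))\<^sup>2 * (cmod (v$j))\<^sup>2)"
    by (simp add: norm_vec_power2 outer2_sym_def outer2_def entry)
  also have "\<dots> = 2 * ((norm v)\<^sup>2 * (norm w)\<^sup>2)"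
    by (simp add: norm_vec_power2 sum.distrib flip: sum_product)
  also have "\<dots> = (sqrt 2 * (norm v * norm w))\<^sup>2"
    by (simp add: power_mult_distrib)
  finally show ?thesis
    by (simp add: power2_eq_iff_nonneg)
qed

lemma norm_outer2_sym_le: "norm (outer2_sym v w) \<le> 2 * (norm v * norm w)"
  using norm_triangle_ineq[of "outer2 v w" "outer2 w v"]
  by (simp add: outer2_sym_def norm_outer2)

lemma norm_matrix_restrict_le:
  "norm ((\<chi> i j. if P i j then X$i$j else 0) :: complex^'n^'n) \<le> norm X"
proof -
  have "(norm ((\<chi> i j. if P i j then X$i$j else 0) :: complex^'n^'n))\<^sup>2 \<le> (norm X)\<^sup>2"
    unfolding norm_vec_power2 by (intro sum_mono) (auto simp: norm_vec_power2 intro!: sum_mono)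
  then show ?thesis
    by (simp add: power2_le_iff_abs_le)
qed

lemma hermitian_outer2_sym: "hermitian (outer2_sym v w)"
  by (simp add: hermitian_def outer2_sym_def outer2_def)

lemma hermitian_outer_diff: "hermitian (outer v - outer x)"
  by (simp add: hermitian_def outer_def)

lemma rank_outer2_add_le:
  fixes v w v' w' :: "complex^'n::finite"
  shows "rank (outer2 v w + outer2 v' w') \<le> 2"
proof -
  let ?w = "(\<chi> j. cnj (w$j)) :: complex^'n" and ?w' = "(\<chi> j. cnj (w'$j)) :: complex^'n"
  have "rows (outer2 v w + outer2 v' w') \<subseteq> vec.span {?w, ?w'}"
  proof
    fix r assume "r \<in> rows (outer2 v w + outer2 v' w')"
    then obtain i where "r = row i (outer2 v w + outer2 v' w')"
      by (auto simp: rows_def)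
    then have "r = v$i *s ?w + v'$i *s ?w'"
      by (simp add: row_def outer2_def vec_eq_iff)
    then show "r \<in> vec.span {?w, ?w'}"
      by (simp add: vec.span_add vec.span_base vec.span_scale)
  qed
  then have "vec.dim (rows (outer2 v w + outer2 v' w')) \<le> card {?w, ?w'}"
    by (intro vec.dim_le_card) auto
  also have "\<dots> \<le> 2"
    by (simp add: card_insert_le_m1)
  finally show ?thesis
    by (simp add: row_rank_def_gen)
qed

lemma rank_outer_diff_le: "rank (outer v - outer x) \<le> 2"
proof -
  have "outer v - outer x = outer2 v v + outer2 (- x) x"
    by (simp add: outer_eq_outer2 outer2_def vec_eq_iff)
  then show ?thesis
    using rank_outer2_add_le by metis
qed

lemma rank_outer2_sym_le: "rank (outer2_sym v w) \<le> 2"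
  unfolding outer2_sym_def by (rule rank_outer2_add_le)

lemma nzrows_le_card:
  assumes "\<And>i j. X$i$j \<noteq> 0 \<Longrightarrow> i \<in> S"
  shows "nzrows X \<le> card S"
  unfolding nzrows_def using assms by (intro card_mono) auto

lemma linear_meas:
  fixes a :: "'m::finite \<Rightarrow> complex^'n::finite"
  shows "linear (meas a)"
proof (rule linearI)
  show "meas a (X + Y) = meas a X + meas a Y" for X Y
    by (simp add: meas_def vec_eq_iff matrix_vector_mult_def sum.distrib algebra_simps)
  show "meas a (r *\<^sub>R X) = r *\<^sub>R meas a X" for r X
  proof -
    have "(r *\<^sub>R X) *v v = of_real r *s (X *v v)" for v :: "complex^'n"
      unfolding vec_eq_iff matrix_vector_mult_def vector_scaleR_component
      by (simp add: scaleR_conv_of_real sum_distrib_left mult.assoc)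
    then show ?thesis
      by (simp add: meas_def vec_eq_iff mult.left_commute[of _ "of_real r"]
          flip: sum_distrib_left)
  qed
qed

lemma sum_abs_le_sqrt_card_L2_set: "(\<Sum>i\<in>A. \<bar>f i\<bar>) \<le> sqrt (card A) * L2_set f A"
  using L2_set_mult_ineq[of f "\<lambda>_. 1" A] by (simp add: L2_set_constant mult.commute)

lemma l1m_triangle: "l1m (u + v) \<le> l1m u + l1m v"
  unfolding l1m_def by (simp add: sum.distrib[symmetric] sum_mono abs_triangle_ineq)

lemma l1m_diff_le: "l1m (u - v) \<le> l1m u + l1m v"
  using l1m_triangle[of u "- v"] by (simp add: l1m_def)

lemma l1m_zero [simp]: "l1m 0 = 0"
  by (simp add: l1m_def)

lemma l1m_sum_le: "l1m (sum f S) \<le> (\<Sum>s\<in>S. l1m (f s))"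
  by (induction S rule: infinite_finite_induct)
    (auto intro: order_trans[OF l1m_triangle])

lemma l1m_double: "l1m (v + v) = 2 * l1m v"
  by (simp add: l1m_def sum_distrib_left abs_mult flip: mult_2)

lemma l1m_le_sqrt_card_norm: "l1m (v::real^'m) \<le> sqrt (real CARD('m)) * norm v"
  using sum_abs_le_sqrt_card_L2_set[of "\<lambda>i. v$i" UNIV] by (simp add: l1m_def norm_vec_def L2_set_def)

lemma l1_nonneg: "0 \<le> l1 x"
  by (simp add: l1_def sum_nonneg)

lemma l1_triangle: "l1 (v + w) \<le> l1 v + l1 w"
  unfolding l1_def by (simp add: sum.distrib[symmetric] sum_mono norm_triangle_ineq)

lemma l1_scale: "l1 (\<gamma> *s v) = cmod \<gamma> * l1 v"
  by (simp add: l1_def norm_mult sum_distrib_left)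

definition vrestrict :: "'n set \<Rightarrow> complex^'n \<Rightarrow> complex^'n" where
  "vrestrict S v = (\<chi> i. if i \<in> S then v$i else 0)"

lemma l1_vrestrict: "l1 (vrestrict S u) = (\<Sum>i\<in>S. cmod (u$i))"
  unfolding l1_def vrestrict_def by (simp add: if_distrib sum.If_cases)

lemma norm_vrestrict_power2: "(norm (vrestrict S u))\<^sup>2 = (\<Sum>i\<in>S. (cmod (u$i))\<^sup>2)"
proof -
  have "(\<lambda>i. (norm (vrestrict S u $ i))\<^sup>2) = (\<lambda>i. if i \<in> S then (cmod (u$i))\<^sup>2 else 0)"
    by (auto simp: vrestrict_def)
  then show ?thesis
    unfolding norm_vec_power2 by (simp only: norm_complex_def) (simp add: sum.If_cases)
qed

lemma vrestrict_supported:
  assumes "\<And>i. i \<notin> T \<Longrightarrow> z$i = 0"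
  shows "vrestrict T z = z"
  using assms by (auto simp: vrestrict_def vec_eq_iff)

lemma l1_le_sqrt_card_norm:
  assumes "\<And>i. i \<notin> T \<Longrightarrow> z$i = 0"
  shows "l1 z \<le> sqrt (card T) * norm z"
proof -
  have "l1 z = (\<Sum>i\<in>T. \<bar>cmod (z$i)\<bar>)"
    using l1_vrestrict[of T z] by (simp add: vrestrict_supported[OF assms])
  also have "\<dots> \<le> sqrt (card T) * L2_set (\<lambda>i. cmod (z$i)) T"
    by (rule sum_abs_le_sqrt_card_L2_set)
  also have "L2_set (\<lambda>i. cmod (z$i)) T = norm z"
  proof -
    have "(norm z)\<^sup>2 = (\<Sum>i\<in>T. (cmod (z$i))\<^sup>2)"
      using norm_vrestrict_power2[of T z] by (simp add: vrestrict_supported[OF assms])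
    then show ?thesis
      unfolding L2_set_def by (metis real_sqrt_abs abs_norm_cancel)
  qed
  finally show ?thesis .
qed

text \<open>The entrywise triangle inequality \<open>|x\<^sub>i||x\<^sub>j| - |p\<^sub>i||p\<^sub>j| \<le> |(p p\<^sup>* - x x\<^sup>*)\<^sub>i\<^sub>j|\<close>,
  summed over \<open>T \<times> T\<close> and combined with Cauchy--Schwarz.\<close>
lemma l1_power2_diff_le:
  assumes "\<And>i. i \<notin> T \<Longrightarrow> x$i = 0" and "\<And>i. i \<notin> T \<Longrightarrow> p$i = 0"
  shows "(l1 x)\<^sup>2 - (l1 p)\<^sup>2 \<le> card T * norm (outer p - outer x)"
proof -
  define f where "f ij = cmod ((outer p - outer x) $ fst ij $ snd ij)" for ij
  have f_nonneg: "0 \<le> f ij" for ij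
    by (simp add: f_def)
  have "l1 x = (\<Sum>i\<in>T. cmod (x$i))" "l1 p = (\<Sum>i\<in>T. cmod (p$i))"
    using l1_vrestrict[of T x] l1_vrestrict[of T p] by (simp_all add: vrestrict_supported assms)
  then have "(l1 x)\<^sup>2 - (l1 p)\<^sup>2 = (\<Sum>i\<in>T. \<Sum>j\<in>T. cmod (x$i) * cmod (x$j) - cmod (p$i) * cmod (p$j))"
    by (simp add: power2_eq_square sum_product sum_subtractf)
  also have "\<dots> \<le> (\<Sum>i\<in>T. \<Sum>j\<in>T. f (i, j))"
  proof (intro sum_mono)
    fix i j
    have "cmod (x$i * cnj (x$j)) - cmod (p$i * cnj (p$j)) \<le> cmod (p$i * cnj (p$j) - x$i * cnj (x$j))"
      using norm_triangle_ineq2[of "x$i * cnj (x$j)" "p$i * cnj (p$j)"]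
      by (simp add: norm_minus_commute)
    then show "cmod (x$i) * cmod (x$j) - cmod (p$i) * cmod (p$j) \<le> f (i, j)"
      by (simp add: f_def outer_def norm_mult)
  qed
  also have "\<dots> = (\<Sum>ij\<in>T\<times>T. \<bar>f ij\<bar>)"
    by (simp add: sum.cartesian_product' f_nonneg)
  also have "\<dots> \<le> sqrt (card (T\<times>T)) * L2_set f (T\<times>T)"
    by (rule sum_abs_le_sqrt_card_L2_set)
  also have "\<dots> \<le> card T * norm (outer p - outer x)"
  proof -
    have "(L2_set f (T\<times>T))\<^sup>2 = (\<Sum>i\<in>T. \<Sum>j\<in>T. (f (i,j))\<^sup>2)"
      by (simp add: L2_set_def sum_nonneg sum.cartesian_product')
    also have "\<dots> \<le> (\<Sum>i\<in>T. \<Sum>j\<in>UNIV. (f (i,j))\<^sup>2)"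
      by (intro sum_mono sum_mono2) auto
    also have "\<dots> \<le> (\<Sum>i\<in>UNIV. \<Sum>j\<in>UNIV. (f (i,j))\<^sup>2)"
      by (intro sum_mono2) (auto simp: sum_nonneg)
    also have "\<dots> = (norm (outer p - outer x))\<^sup>2"
      by (simp add: norm_vec_power2 f_def)
    finally have "L2_set f (T\<times>T) \<le> norm (outer p - outer x)"
      by (simp add: power2_le_iff_abs_le)
    then show ?thesis
      by (simp add: card_cartesian_product mult_left_mono)
  qed
  finally show ?thesis .
qed

section \<open>Aligning the phase\<close>

definition cinner :: "complex^'n \<Rightarrow> complex^'n \<Rightarrow> complex" where
  "cinner p q = (\<Sum>i\<in>UNIV. cnj (p$i) * q$i)"

lemma of_real_norm_power2: "complex_of_real ((norm p)\<^sup>2) = (\<Sum>i\<in>UNIV. p$i * cnj (p$i))"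
  by (simp only: norm_vec_power2 of_real_sum complex_norm_square)

lemma cmod_cinner_le: "cmod (cinner p q) \<le> norm p * norm q"
proof -
  have "cmod (cinner p q) \<le> (\<Sum>i\<in>UNIV. \<bar>cmod (p$i)\<bar> * \<bar>cmod (q$i)\<bar>)"
    unfolding cinner_def using norm_sum[of "\<lambda>i. cnj (p$i) * q$i" UNIV] by (simp add: norm_mult)
  also have "\<dots> \<le> norm p * norm q"
    unfolding norm_vec_def by (rule L2_set_mult_ineq)
  finally show ?thesis .
qed

lemma norm_outer_diff_power2:
  "(norm (outer p - outer q))\<^sup>2 = (norm p)^4 + (norm q)^4 - 2 * (cmod (cinner p q))\<^sup>2"
proof -
  let ?s = "cinner p q"
  have s_cnj_s: "?s * cnj ?s = of_real (cmod ?s) * of_real (cmod ?s)"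
    by (metis complex_norm_square of_real_mult power2_eq_square)
  have conj_s: "cnj ?s = (\<Sum>i\<in>UNIV. p$i * cnj (q$i))"
    by (simp add: cinner_def mult.commute)
  have "complex_of_real ((norm (outer p - outer q))\<^sup>2) =
      (\<Sum>i\<in>UNIV. \<Sum>j\<in>UNIV. (p$i * cnj (p$i)) * (p$j * cnj (p$j)) + (q$i * cnj (q$i)) * (q$j * cnj (q$j))
        - (p$i * cnj (q$i)) * (cnj (p$j) * q$j) - (cnj (p$i) * q$i) * (p$j * cnj (q$j)))"
    by (simp only: norm_vec_power2 of_real_sum complex_norm_square)
      (simp add: outer_def algebra_simps)
  also have "\<dots> = complex_of_real ((norm p)\<^sup>2) * complex_of_real ((norm p)\<^sup>2)
      + complex_of_real ((norm q)\<^sup>2) * complex_of_real ((norm q)\<^sup>2) - cnj ?s * ?s - ?s * cnj ?s"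
    unfolding of_real_norm_power2 conj_s cinner_def
    by (simp add: sum_product sum.distrib sum_subtractf)
  also have "\<dots> = complex_of_real ((norm p)^4 + (norm q)^4 - 2 * (cmod ?s)\<^sup>2)"
    by (simp add: s_cnj_s mult.commute power4_eq_xxxx power2_eq_square)
  finally show ?thesis
    using of_real_eq_iff by blast
qed

text \<open>Rotating \<open>p\<close> by the phase of \<open>\<langle>p, q\<rangle>\<close> makes the cross term real and maximal.\<close>
lemma exists_phase_norm_diff_power2:
  obtains \<gamma> where "cmod \<gamma> = 1"
    "(norm (q - \<gamma> *s p))\<^sup>2 = (norm p)\<^sup>2 + (norm q)\<^sup>2 - 2 * cmod (cinner p q)"
proof -
  let ?s = "cinner p q" and ?t = "cmod (cinner p q)"
  define \<gamma> where "\<gamma> = (if ?s = 0 then 1 else ?s / of_real ?t)"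
  have s_cnj_s: "?s * cnj ?s = of_real ?t * of_real ?t"
    by (metis complex_norm_square of_real_mult power2_eq_square)
  have \<gamma>_unit: "cmod \<gamma> = 1"
    by (simp add: \<gamma>_def norm_divide)
  have \<gamma>_cnj: "\<gamma> * cnj \<gamma> = 1"
    using \<gamma>_unit by (metis complex_norm_square of_real_1 power_one)
  have \<gamma>_s: "cnj \<gamma> * ?s = of_real ?t"
    by (cases "?s = 0") (simp_all add: \<gamma>_def s_cnj_s field_simps)
  then have \<gamma>_cnj_s: "\<gamma> * cnj ?s = of_real ?t"
    by (metis complex_cnj_cnj complex_cnj_mult complex_cnj_complex_of_real)
  have conj_s: "cnj ?s = (\<Sum>i\<in>UNIV. p$i * cnj (q$i))"
    by (simp add: cinner_def mult.commute)
  have "complex_of_real ((norm (q - \<gamma> *s p))\<^sup>2)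
      = (\<Sum>i\<in>UNIV. (q$i - \<gamma> * p$i) * cnj (q$i - \<gamma> * p$i))"
    by (simp only: norm_vec_power2 of_real_sum complex_norm_square) simp
  also have "\<dots> = (\<Sum>i\<in>UNIV. q$i * cnj (q$i)) + (\<gamma> * cnj \<gamma>) * (\<Sum>i\<in>UNIV. p$i * cnj (p$i))
      - cnj \<gamma> * ?s - \<gamma> * (\<Sum>i\<in>UNIV. p$i * cnj (q$i))"
    by (simp add: cinner_def algebra_simps sum.distrib sum_distrib_left sum_subtractf)
  also have "\<dots> = complex_of_real ((norm p)\<^sup>2 + (norm q)\<^sup>2 - 2 * ?t)"
    by (simp add: \<gamma>_cnj \<gamma>_s \<gamma>_cnj_s flip: conj_s of_real_norm_power2)
  finally have "complex_of_real ((norm (q - \<gamma> *s p))\<^sup>2)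
      = complex_of_real ((norm p)\<^sup>2 + (norm q)\<^sup>2 - 2 * ?t)" .
  then show ?thesis
    using that[OF \<gamma>_unit] of_real_eq_iff by blast
qed

text \<open>With \<open>d\<^sup>2 = x\<^sup>2 + y\<^sup>2 - 2t\<close> and \<open>h\<^sup>2 = x\<^sup>4 + y\<^sup>4 - 2t\<^sup>2\<close>: the function
  \<open>g(t) = 2h\<^sup>2 - x\<^sup>2d\<^sup>2\<close> is concave in \<open>t\<close> and nonnegative at both ends of \<open>[0, xy]\<close>.\<close>
lemma weighted_dist_le_outer_dist:
  fixes x y t :: real
  assumes "0 \<le> x" "0 \<le> y" "0 \<le> t" "t \<le> x * y"
  shows "x\<^sup>2 * (x\<^sup>2 + y\<^sup>2 - 2 * t) \<le> 2 * (x^4 + y^4 - 2 * t\<^sup>2)"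
proof -
  define g where "g z = x^4 + 2 * y^4 - x\<^sup>2 * y\<^sup>2 + 2 * x\<^sup>2 * z - 4 * z\<^sup>2" for z
  have g0: "0 \<le> g 0"
  proof -
    have "g 0 = (x\<^sup>2 - y\<^sup>2)\<^sup>2 + y^4 + x\<^sup>2 * y\<^sup>2"
      by (simp add: g_def power2_eq_square power4_eq_xxxx algebra_simps)
    then show ?thesis
      by simp
  qed
  have g_xy: "0 \<le> g (x * y)"
  proof -
    have "g (x * y) = (x - y)\<^sup>2 * (x\<^sup>2 + 4 * x * y + 2 * y\<^sup>2)"
      by (simp add: g_def power2_eq_square power4_eq_xxxx algebra_simps)
    then show ?thesis
      using assms by simp
  qed
  have interpolation: "(x * y) * g t = (x * y - t) * g 0 + t * g (x * y) + 4 * t * (x * y) * (x * y - t)"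
    by (simp add: g_def power2_eq_square power4_eq_xxxx algebra_simps)
  have "0 \<le> g t"
  proof (cases "x * y = 0")
    case True
    then show ?thesis
      using assms g0 by (metis antisym)
  next
    case False
    then have "0 < x * y"
      using assms by (simp add: less_le)
    moreover have "0 \<le> (x * y) * g t"
      unfolding interpolation using assms g0 g_xy by (intro add_nonneg_nonneg mult_nonneg_nonneg) auto
    ultimately show ?thesis
      by (simp add: zero_le_mult_iff)
  qed
  then show ?thesis
    by (simp add: g_def power2_eq_square power4_eq_xxxx algebra_simps)
qed

lemma dist_power2_le_outer_dist:
  fixes x y t :: real
  assumes "0 \<le> x" "0 \<le> y" "0 \<le> t" "t \<le> x * y"
  shows "(x\<^sup>2 + y\<^sup>2 - 2 * t)\<^sup>2 \<le> 4 * (x^4 + y^4 - 2 * t\<^sup>2)"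
proof -
  have "2 * t \<le> x\<^sup>2 + y\<^sup>2"
    using assms sum_squares_bound[of x y] by linarith
  then have "(x\<^sup>2 + y\<^sup>2 - 2 * t)\<^sup>2 \<le> (x\<^sup>2 + y\<^sup>2) * (x\<^sup>2 + y\<^sup>2 - 2 * t)"
    using assms by (simp add: power2_eq_square mult_right_mono)
  also have "\<dots> = x\<^sup>2 * (x\<^sup>2 + y\<^sup>2 - 2 * t) + y\<^sup>2 * (y\<^sup>2 + x\<^sup>2 - 2 * t)"
    by (simp add: algebra_simps)
  also have "\<dots> \<le> 4 * (x^4 + y^4 - 2 * t\<^sup>2)"
    using weighted_dist_le_outer_dist[OF assms] weighted_dist_le_outer_dist[of y x t] assms
    by (simp add: mult.commute)
  finally show ?thesis .
qed

lemma exists_phase_close: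
  fixes p q :: "complex^'n::finite"
  obtains \<gamma> where "cmod \<gamma> = 1"
    "norm p * norm (q - \<gamma> *s p) \<le> sqrt 2 * norm (outer p - outer q)"
    "norm q * norm (q - \<gamma> *s p) \<le> sqrt 2 * norm (outer p - outer q)"
    "(norm (q - \<gamma> *s p))\<^sup>2 \<le> 2 * norm (outer p - outer q)"
proof -
  obtain \<gamma> where \<gamma>: "cmod \<gamma> = 1"
    and d: "(norm (q - \<gamma> *s p))\<^sup>2 = (norm p)\<^sup>2 + (norm q)\<^sup>2 - 2 * cmod (cinner p q)"
    by (rule exists_phase_norm_diff_power2)
  let ?d = "norm (q - \<gamma> *s p)" and ?h = "norm (outer p - outer q)"
  have h: "?h\<^sup>2 = (norm p)^4 + (norm q)^4 - 2 * (cmod (cinner p q))\<^sup>2"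
    by (rule norm_outer_diff_power2)
  note t = norm_ge_zero[of "cinner p q"] cmod_cinner_le[of p q]
  have p_bound: "(norm p * ?d)\<^sup>2 \<le> (sqrt 2 * ?h)\<^sup>2"
    using weighted_dist_le_outer_dist[of "norm p" "norm q"] t
    by (simp add: d h power_mult_distrib)
  have q_bound: "(norm q * ?d)\<^sup>2 \<le> (sqrt 2 * ?h)\<^sup>2"
  proof -
    have "(norm q)\<^sup>2 * ((norm q)\<^sup>2 + (norm p)\<^sup>2 - 2 * cmod (cinner p q))
        \<le> 2 * ((norm q)^4 + (norm p)^4 - 2 * (cmod (cinner p q))\<^sup>2)"
      using weighted_dist_le_outer_dist[of "norm q" "norm p" "cmod (cinner p q)"] t
      by (simp add: mult.commute)
    then show ?thesis
      by (simp add: d h power_mult_distrib algebra_simps)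
  qed
  have "(?d\<^sup>2)\<^sup>2 \<le> (2 * ?h)\<^sup>2"
    using dist_power2_le_outer_dist[of "norm p" "norm q"] t
    by (simp add: d h power_mult_distrib)
  then have "?d\<^sup>2 \<le> 2 * ?h"
    by (rule power2_le_imp_le) simp
  with p_bound q_bound show ?thesis
    using that[OF \<gamma>] by (simp add: power2_le_iff_abs_le)
qed

section \<open>Sorted blocks\<close>

lemma vrestrict_level_sets_sum:
  fixes bl :: "'n::finite \<Rightarrow> nat"
  assumes "\<And>i. bl i \<le> N"
  shows "u = (\<Sum>j\<in>{0..N}. vrestrict {i. bl i = j} u)"
proof -
  have "u$i = (\<Sum>j\<in>{0..N}. if bl i = j then u$i else 0)" for i
    using assms[of i] by simp
  then show ?thesis
    by (simp add: vec_eq_iff vrestrict_def)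
qed

lemma l1_level_sets_sum:
  fixes bl :: "'n::finite \<Rightarrow> nat"
  assumes "\<And>i. bl i \<le> N"
  shows "l1 u = (\<Sum>j\<in>{0..N}. l1 (vrestrict {i. bl i = j} u))"
proof -
  have "(\<Sum>j\<in>{0..N}. l1 (vrestrict {i. bl i = j} u))
      = (\<Sum>j\<in>{0..N}. \<Sum>i\<in>UNIV. if bl i = j then cmod (u$i) else 0)"
    unfolding l1_def vrestrict_def by (intro sum.cong refl) (simp add: if_distrib)
  also have "\<dots> = (\<Sum>i\<in>UNIV. \<Sum>j\<in>{0..N}. if bl i = j then cmod (u$i) else 0)"
    by (rule sum.swap)
  also have "\<dots> = l1 u"
    unfolding l1_def using assms by simp
  finally show ?thesis
    by simp
qed

lemma div_eq_iff_window:
  fixes p K j :: nat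
  assumes "0 < K"
  shows "p div K = j \<longleftrightarrow> j * K \<le> p \<and> p < j * K + K"
  using less_eq_div_iff_mult_less_eq[OF assms, of j p] div_less_iff_less_mult[OF assms, of p "Suc j"]
  by auto

text \<open>Block \<open>0\<close> is the set \<open>Z\<close>; the remaining indices are sorted by decreasing modulus
  of \<open>u\<close> and cut into consecutive blocks \<open>1, 2, \<dots>\<close> of size \<open>K\<close>, the last one possibly shorter.\<close>
locale sorted_blocks =
  fixes u :: "complex^'n::finite" and Z :: "'n set" and K :: nat and bl :: "'n \<Rightarrow> nat"
  assumes K_pos: "1 \<le> K"
    and block_zero_iff: "bl i = 0 \<longleftrightarrow> i \<in> Z"
    and block_le_card: "bl i \<le> CARD('n)"
    and card_block_le: "1 \<le> j \<Longrightarrow> card {i. bl i = j} \<le> K"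
    and block_decreasing: "2 \<le> j \<Longrightarrow> bl i = j \<Longrightarrow> bl i' = j - 1 \<Longrightarrow> cmod (u$i) \<le> cmod (u$i')"
    and block_full: "2 \<le> j \<Longrightarrow> bl i = j \<Longrightarrow> K \<le> card {i'. bl i' = j - 1}"
begin

text \<open>Every entry of block \<open>j\<close> is bounded by the mean modulus over the full block \<open>j - 1\<close>.\<close>
lemma norm_block_le_l1_prev:
  assumes j: "2 \<le> j"
  shows "norm (vrestrict {i. bl i = j} u) * sqrt K \<le> l1 (vrestrict {i. bl i = j - 1} u)"
proof (cases "\<exists>i0. bl i0 = j")
  case False
  then have "vrestrict {i. bl i = j} u = 0"
    by (simp add: vrestrict_def vec_eq_iff)
  then show ?thesis
    by (simp add: l1_nonneg)
next
  case True
  then obtain i0 where i0: "bl i0 = j" ..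
  define M where "M = l1 (vrestrict {i. bl i = j - 1} u)"
  have K0: "0 < real K"
    using K_pos by simp
  have entry_le: "cmod (u$i) \<le> M / K" if "bl i = j" for i
  proof -
    have "cmod (u$i) * K \<le> cmod (u$i) * card {i'. bl i' = j - 1}"
      using block_full[OF j i0] by (intro mult_left_mono) simp_all
    also have "\<dots> = (\<Sum>i'\<in>{i'. bl i' = j - 1}. cmod (u$i))"
      by simp
    also have "\<dots> \<le> M"
      unfolding M_def l1_vrestrict using block_decreasing[OF j that] by (intro sum_mono) auto
    finally show ?thesis
      using K0 by (simp add: pos_le_divide_eq)
  qed
  have "(norm (vrestrict {i. bl i = j} u))\<^sup>2 \<le> (\<Sum>i\<in>{i. bl i = j}. (M / K)\<^sup>2)"
    unfolding norm_vrestrict_power2 using entry_le by (intro sum_mono power_mono) auto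
  also have "\<dots> \<le> K * (M / K)\<^sup>2"
    using card_block_le[of j] j by (simp add: mult_right_mono)
  also have "\<dots> = (M / sqrt K)\<^sup>2"
    using K0 by (simp add: power_divide power2_eq_square)
  finally have "norm (vrestrict {i. bl i = j} u) \<le> M / sqrt K"
    by (rule power2_le_imp_le) (simp add: M_def l1_nonneg)
  then show ?thesis
    using K0 by (simp add: M_def pos_le_divide_eq)
qed

end

definition list_pos :: "'a list \<Rightarrow> 'a \<Rightarrow> nat" where
  "list_pos l i = (THE p. p < length l \<and> l!p = i)"

lemma list_pos:
  assumes "distinct l" and "i \<in> set l"
  shows "list_pos l i < length l" and "l ! list_pos l i = i"
  using theI'[OF distinct_Ex1[OF assms]] by (simp_all add: list_pos_def)

lemma list_pos_nth: "distinct l \<Longrightarrow> p < length l \<Longrightarrow> list_pos l (l!p) = p"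
  unfolding list_pos_def by (intro the1_equality) (auto simp: distinct_Ex1)

lemma card_div_window_le:
  fixes K :: nat
  assumes "0 < K"
  shows "card {p. p < n \<and> p div K = j} \<le> K"
proof -
  have "{p. p < n \<and> p div K = j} \<subseteq> {j * K..<j * K + K}"
    using assms by (auto simp: div_eq_iff_window)
  then show ?thesis
    using card_mono[of "{j * K..<j * K + K}"] by simp
qed

definition list_blocks :: "'a set \<Rightarrow> 'a list \<Rightarrow> nat \<Rightarrow> 'a \<Rightarrow> nat" where
  "list_blocks Z l K i = (if i \<in> Z then 0 else list_pos l i div K + 1)"

lemma list_blocks_level_set:
  assumes "set l = UNIV - Z" and "distinct l" and "1 \<le> j"
  shows "{i. list_blocks Z l K i = j} = (\<lambda>p. l!p) ` {p. p < length l \<and> p div K = j - 1}"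
proof (intro set_eqI iffI)
  fix i assume "i \<in> {i. list_blocks Z l K i = j}"
  with assms show "i \<in> (\<lambda>p. l!p) ` {p. p < length l \<and> p div K = j - 1}"
    using list_pos[OF assms(2), of i]
    by (intro image_eqI[of _ _ "list_pos l i"]) (auto simp: list_blocks_def split: if_splits)
next
  fix i assume "i \<in> (\<lambda>p. l!p) ` {p. p < length l \<and> p div K = j - 1}"
  then obtain p where "p < length l" "p div K = j - 1" "i = l!p"
    by blast
  with assms show "i \<in> {i. list_blocks Z l K i = j}"
    using nth_mem[of p l] by (auto simp: list_blocks_def list_pos_nth)
qed

lemma sorted_blocks_list_blocks:
  fixes u :: "complex^'n::finite"
  assumes K: "1 \<le> K" and l: "set l = UNIV - Z" "distinct l" "sorted (map (\<lambda>i. - cmod (u$i)) l)"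
  shows "sorted_blocks u Z K (list_blocks Z l K)"
proof (unfold_locales, fact K)
  let ?bl = "list_blocks Z l K"
  have pos: "list_pos l i < length l" "l ! list_pos l i = i" if "i \<notin> Z" for i
    using list_pos[OF l(2), of i] that l(1) by auto
  show "?bl i = 0 \<longleftrightarrow> i \<in> Z" for i
    by (simp add: list_blocks_def)
  show "?bl i \<le> CARD('n)" for i
  proof -
    have "length l \<le> CARD('n)"
      using distinct_card[OF l(2)] card_mono[of UNIV "set l"] by simp
    moreover have "list_pos l i div K < length l" if "i \<notin> Z"
      using pos(1)[OF that] div_le_dividend le_less_trans by blast
    ultimately show ?thesis
      by (auto simp: list_blocks_def)
  qed
  show "card {i. ?bl i = j} \<le> K" if "1 \<le> j" for j
    unfolding list_blocks_level_set[OF l(1,2) that]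
    using K by (intro order_trans[OF card_image_le card_div_window_le]) simp_all
  show "cmod (u$i) \<le> cmod (u$i')" if "2 \<le> j" "?bl i = j" "?bl i' = j - 1" for j i i'
  proof -
    have "i \<notin> Z" "i' \<notin> Z" "list_pos l i' div K < list_pos l i div K"
      using that by (auto simp: list_blocks_def split: if_splits)
    then have "list_pos l i' < list_pos l i"
      by (meson div_le_mono not_less)
    then show ?thesis
      using sorted_nth_mono[OF l(3), of "list_pos l i'" "list_pos l i"] pos[OF \<open>i \<notin> Z\<close>]
        pos[OF \<open>i' \<notin> Z\<close>]
      by simp
  qed
  show "K \<le> card {i'. ?bl i' = j - 1}" if "2 \<le> j" "?bl i = j" for j i
  proof -
    define j' where "j' = j - 2"
    have j: "j = Suc (Suc j')"
      using that(1) by (simp add: j'_def)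
    have i: "i \<notin> Z" "list_pos l i div K = Suc j'"
      using that by (auto simp: list_blocks_def j split: if_splits)
    then have "j' * K + K \<le> list_pos l i"
      using K by (simp add: div_eq_iff_window)
    then have window: "{p. p < length l \<and> p div K = j'} = {j' * K..<j' * K + K}"
      using pos(1)[OF i(1)] K by (auto simp: div_eq_iff_window)
    have "inj_on (\<lambda>p. l!p) {p. p < length l \<and> p div K = j'}"
      using inj_on_nth[OF l(2)] by auto
    then have "card {i'. ?bl i' = j - 1} = K"
      using list_blocks_level_set[OF l(1,2), of "j - 1"] window by (simp add: card_image j)
    then show ?thesis
      by simp
  qed
qed

lemma sorted_blocks_exist:
  fixes u :: "complex^'n::finite"
  assumes "1 \<le> K"
  obtains bl where "sorted_blocks u Z K bl"
proof -
  obtain l0 where l0: "set l0 = UNIV - Z" "distinct l0"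
    using finite_distinct_list[of "UNIV - Z"] by auto
  let ?l = "sort_key (\<lambda>i. - cmod (u$i)) l0"
  have "sorted_blocks u Z K (list_blocks Z ?l K)"
    using l0 by (intro sorted_blocks_list_blocks assms) simp_all
  then show ?thesis
    by (rule that)
qed

lemma RIP_upper_outer2_sym:
  fixes a :: "'m::finite \<Rightarrow> complex^'n::finite" and s c C :: real
  assumes "RIP a 2 s c C" and "real (card S) \<le> s"
    and "\<And>i. v$i \<noteq> 0 \<Longrightarrow> i \<in> S" and "\<And>i. w$i \<noteq> 0 \<Longrightarrow> i \<in> S"
  shows "l1m (meas a (outer2_sym v w)) \<le> real CARD('m) * C * norm (outer2_sym v w)"
proof -
  have "nzrows (outer2_sym v w) \<le> card S"
  proof (rule nzrows_le_card)
    fix i j assume "outer2_sym v w $ i $ j \<noteq> 0"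
    then show "i \<in> S"
      using assms(3,4)[of i] by (cases "v$i = 0"; cases "w$i = 0") (auto simp: outer2_sym_def outer2_def)
  qed
  then have "l1m (meas a (outer2_sym v w)) / CARD('m) \<le> C * norm (outer2_sym v w)"
    using assms(1,2) hermitian_outer2_sym[of v w] rank_outer2_sym_le[of v w]
    unfolding RIP_def frob_eq_norm by auto
  then show ?thesis
    by (simp add: divide_le_eq mult_ac)
qed

lemma RIP_lower_outer_diff:
  fixes a :: "'m::finite \<Rightarrow> complex^'n::finite" and s c C :: real
  assumes "RIP a 2 s c C" and "real (card S) \<le> s"
    and "\<And>i. v$i \<noteq> 0 \<Longrightarrow> i \<in> S" and "\<And>i. x$i \<noteq> 0 \<Longrightarrow> i \<in> S"
  shows "real CARD('m) * c * norm (outer v - outer x) \<le> l1m (meas a (outer v - outer x))"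
proof -
  have "nzrows (outer v - outer x) \<le> card S"
  proof (rule nzrows_le_card)
    fix i j assume "(outer v - outer x) $ i $ j \<noteq> 0"
    then show "i \<in> S"
      using assms(3,4)[of i] by (cases "v$i = 0"; cases "x$i = 0") (auto simp: outer_def)
  qed
  then have "c * norm (outer v - outer x) \<le> l1m (meas a (outer v - outer x)) / CARD('m)"
    using assms(1,2) hermitian_outer_diff[of v x] rank_outer_diff_le[of v x]
    unfolding RIP_def frob_eq_norm by auto
  then show ?thesis
    by (simp add: le_divide_eq mult_ac)
qed

section \<open>Splitting \<open>H\<close> along the blocks\<close>

locale sparse_descent = sorted_blocks u "{i. x$i \<noteq> 0}" K bl
  for x u :: "complex^'n::finite" and K :: nat and bl :: "'n \<Rightarrow> nat" +
  fixes k :: nat and \<alpha> :: real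
  assumes k_pos: "1 \<le> k"
    and alpha_ge_1: "1 \<le> \<alpha>"
    and K_eq: "real K = \<alpha> * real k"
    and card_support: "card {i. x$i \<noteq> 0} \<le> k"
    and l1_le: "l1 u \<le> l1 x"
begin

definition block :: "nat \<Rightarrow> complex^'n" where
  "block j = vrestrict {i. bl i = j} u"

definition head :: "complex^'n" where
  "head = block 0 + block 1"

definition tail :: "complex^'n" where
  "tail = (\<Sum>j\<in>{2..CARD('n)}. block j)"

definition tail_norm_sum :: real where
  "tail_norm_sum = (\<Sum>j\<in>{2..CARD('n)}. norm (block j))"

definition off_support_l1 :: real where
  "off_support_l1 = (\<Sum>j\<in>{1..CARD('n)}. l1 (block j))"

definition head_error :: real where
  "head_error = norm (outer head - outer x)"

definition cross_bound :: real where
  "cross_bound = sqrt 2 * norm (block 0) * tail_norm_sum + sqrt 2 * norm (block 1) * tail_norm_sum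
     + tail_norm_sum\<^sup>2"

lemma block_nonzero: "block j $ i \<noteq> 0 \<Longrightarrow> bl i = j"
  by (simp add: block_def vrestrict_def split: if_splits)

lemma blocks_disjoint: "i \<noteq> j \<Longrightarrow> block i $ t = 0 \<or> block j $ t = 0"
  using block_nonzero by blast

lemma card_block_le_K: "card {i. bl i = j} \<le> K"
proof (cases "j = 0")
  case True
  have "real k \<le> real K"
    using K_eq alpha_ge_1 mult_right_mono[OF alpha_ge_1, of "real k"] by simp
  then show ?thesis
    using True card_support by (simp add: block_zero_iff)
next
  case False
  then show ?thesis
    by (simp add: card_block_le)
qed

lemma card_two_blocks_le: "real (card ({i. bl i = j} \<union> {i. bl i = j'})) \<le> 2 * \<alpha> * real k"
  using card_Un_le[of "{i. bl i = j}" "{i. bl i = j'}"] card_block_le_K[of j] card_block_le_K[of j'] K_eq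
  by simp

lemma u_eq_head_tail: "u = head + tail"
proof -
  have "u = (\<Sum>j\<in>{0..CARD('n)}. block j)"
    unfolding block_def by (rule vrestrict_level_sets_sum) (rule block_le_card)
  also have "\<dots> = block 0 + (block 1 + tail)"
    by (simp add: tail_def sum.atLeast_Suc_atMost numeral_2_eq_2)
  finally show ?thesis
    by (simp add: head_def add.assoc)
qed

lemma l1_u_eq: "l1 u = l1 (block 0) + off_support_l1"
proof -
  have "l1 u = (\<Sum>j\<in>{0..CARD('n)}. l1 (block j))"
    unfolding block_def by (rule l1_level_sets_sum) (rule block_le_card)
  then show ?thesis
    by (simp add: off_support_l1_def sum.atLeast_Suc_atMost)
qed

lemma tail_norm_sum_le: "sqrt \<alpha> * sqrt k * tail_norm_sum \<le> off_support_l1"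
proof -
  have "sqrt \<alpha> * sqrt k * tail_norm_sum = (\<Sum>j\<in>{2..CARD('n)}. norm (block j) * sqrt K)"
    using K_eq by (simp add: tail_norm_sum_def sum_distrib_left real_sqrt_mult mult_ac)
  also have "\<dots> \<le> (\<Sum>j\<in>{2..CARD('n)}. l1 (block (j - 1)))"
    unfolding block_def by (intro sum_mono norm_block_le_l1_prev) simp
  also have "\<dots> = (\<Sum>j\<in>{1..CARD('n) - 1}. l1 (block j))"
    by (rule sum.reindex_bij_witness[of _ Suc "\<lambda>j. j - 1"]) auto
  also have "\<dots> \<le> off_support_l1"
    unfolding off_support_l1_def by (intro sum_mono2) (auto simp: l1_nonneg)
  finally show ?thesis .
qed

lemma block_eq_zero: "bl i \<noteq> j \<Longrightarrow> block j $ i = 0"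
  using block_nonzero by blast

lemma block0_outside_support: "x$i = 0 \<Longrightarrow> block 0 $ i = 0"
  by (simp add: block_eq_zero block_zero_iff)

lemma head_on_support: "x$i \<noteq> 0 \<Longrightarrow> head $ i = block 0 $ i"
  using block_eq_zero[of i 1] block_zero_iff[of i] by (simp add: head_def)

lemma head_on_block1: "bl i = 1 \<Longrightarrow> head $ i = block 1 $ i"
  using block_eq_zero[of i 0] by (simp add: head_def)

lemma block0_error_le_head_error: "norm (outer (block 0) - outer x) \<le> head_error"
proof -
  let ?T = "{i. x$i \<noteq> 0}"
  have "(outer (block 0) - outer x) $ i $ j
      = (if i \<in> ?T \<and> j \<in> ?T then (outer head - outer x)$i$j else 0)" for i j
    by (cases "x$i = 0"; cases "x$j = 0")
      (simp_all add: outer_def head_on_support block0_outside_support)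
  then have "outer (block 0) - outer x
      = (\<chi> i j. if i \<in> ?T \<and> j \<in> ?T then (outer head - outer x)$i$j else 0)"
    by (simp add: vec_eq_iff)
  then show ?thesis
    unfolding head_error_def by (simp only: norm_matrix_restrict_le)
qed

lemma norm_block1_power2_le: "(norm (block 1))\<^sup>2 \<le> head_error"
proof -
  let ?B = "{i. bl i = 1}"
  have block1: "block 0 $ i = 0" "x$i = 0" if "bl i = 1" for i
    using that block_eq_zero[of i 0] block_zero_iff[of i] by auto
  have "outer (block 1) $ i $ j
      = (if i \<in> ?B \<and> j \<in> ?B then (outer head - outer x)$i$j else 0)" for i j
    by (cases "bl i = 1"; cases "bl j = 1") (simp_all add: outer_def head_on_block1 block1 block_eq_zero)
  then have "outer (block 1) = (\<chi> i j. if i \<in> ?B \<and> j \<in> ?B then (outer head - outer x)$i$j else 0)"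
    by (simp add: vec_eq_iff)
  then have "norm (outer (block 1)) \<le> head_error"
    unfolding head_error_def by (simp only: norm_matrix_restrict_le)
  then show ?thesis
    by (simp add: outer_eq_outer2 norm_outer2 power2_eq_square)
qed

lemma off_support_l1_le: "off_support_l1 \<le> l1 x - l1 (block 0)"
  using l1_le l1_u_eq by simp

lemma norm_block0_mult_off_support_l1_le:
  "norm (block 0) * off_support_l1 \<le> sqrt 2 * sqrt k * head_error"
proof -
  obtain \<gamma> where \<gamma>: "cmod \<gamma> = 1"
    and close: "norm (block 0) * norm (x - \<gamma> *s block 0) \<le> sqrt 2 * norm (outer (block 0) - outer x)"
    using exists_phase_close[of "block 0" x] by blast
  have "l1 x \<le> l1 (x - \<gamma> *s block 0) + l1 (block 0)"
    using l1_triangle[of "x - \<gamma> *s block 0" "\<gamma> *s block 0"] by (simp add: l1_scale \<gamma>)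
  also have "l1 (x - \<gamma> *s block 0) \<le> sqrt k * norm (x - \<gamma> *s block 0)"
  proof -
    have "l1 (x - \<gamma> *s block 0) \<le> sqrt (card {i. x$i \<noteq> 0}) * norm (x - \<gamma> *s block 0)"
      by (rule l1_le_sqrt_card_norm) (simp add: block0_outside_support)
    also have "\<dots> \<le> sqrt k * norm (x - \<gamma> *s block 0)"
      using card_support by (intro mult_right_mono) auto
    finally show ?thesis .
  qed
  finally have "off_support_l1 \<le> sqrt k * norm (x - \<gamma> *s block 0)"
    using off_support_l1_le by linarith
  then have "norm (block 0) * off_support_l1 \<le> norm (block 0) * (sqrt k * norm (x - \<gamma> *s block 0))"
    by (rule mult_left_mono) simp
  also have "\<dots> = sqrt k * (norm (block 0) * norm (x - \<gamma> *s block 0))"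
    by (simp add: mult_ac)
  also have "\<dots> \<le> sqrt k * (sqrt 2 * head_error)"
    using order_trans[OF close mult_left_mono[OF block0_error_le_head_error]]
    by (intro mult_left_mono) auto
  finally show ?thesis
    by (simp add: mult_ac)
qed

lemma off_support_l1_power2_le: "off_support_l1\<^sup>2 \<le> k * head_error"
proof -
  have "0 \<le> off_support_l1"
    by (simp add: off_support_l1_def sum_nonneg l1_nonneg)
  then have "off_support_l1\<^sup>2 \<le> (l1 x - l1 (block 0)) * (l1 x + l1 (block 0))"
    using off_support_l1_le l1_nonneg[of "block 0"] unfolding power2_eq_square
    by (intro mult_mono) auto
  also have "\<dots> = (l1 x)\<^sup>2 - (l1 (block 0))\<^sup>2"
    by (simp add: power2_eq_square algebra_simps)
  also have "\<dots> \<le> card {i. x$i \<noteq> 0} * norm (outer (block 0) - outer x)"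
    by (rule l1_power2_diff_le) (simp_all add: block0_outside_support)
  also have "\<dots> \<le> k * head_error"
    using card_support block0_error_le_head_error by (intro mult_mono) auto
  finally show ?thesis .
qed

lemma tail_norm_sum_nonneg: "0 \<le> tail_norm_sum"
  by (simp add: tail_norm_sum_def sum_nonneg)

lemma head_error_nonneg: "0 \<le> head_error"
  by (simp add: head_error_def)

lemma sqrt_alpha_pos: "0 < sqrt \<alpha>"
  using alpha_ge_1 by simp

lemma norm_block0_mult_tail_le: "sqrt 2 * norm (block 0) * tail_norm_sum \<le> 2 / sqrt \<alpha> * head_error"
proof -
  have "sqrt k * (sqrt \<alpha> * (norm (block 0) * tail_norm_sum)) \<le> norm (block 0) * off_support_l1"
    using mult_left_mono[OF tail_norm_sum_le norm_ge_zero[of "block 0"]] by (simp add: mult_ac)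
  also have "\<dots> \<le> sqrt k * (sqrt 2 * head_error)"
    using norm_block0_mult_off_support_l1_le by (simp add: mult_ac)
  finally have "sqrt \<alpha> * (norm (block 0) * tail_norm_sum) \<le> sqrt 2 * head_error"
    using k_pos by (simp add: mult_le_cancel_left_pos)
  then have "sqrt 2 * (sqrt \<alpha> * (norm (block 0) * tail_norm_sum)) \<le> 2 * head_error"
    using mult_left_mono[of _ _ "sqrt 2"] by (fastforce simp flip: mult.assoc)
  then show ?thesis
    using sqrt_alpha_pos by (simp add: pos_le_divide_eq mult_ac)
qed

lemma norm_block1_mult_tail_le: "sqrt 2 * norm (block 1) * tail_norm_sum \<le> 2 / sqrt \<alpha> * head_error"
proof -
  have "(norm (block 1) * off_support_l1)\<^sup>2 \<le> head_error * (k * head_error)"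
    unfolding power_mult_distrib using norm_block1_power2_le off_support_l1_power2_le
    by (intro mult_mono) (auto simp: head_error_nonneg)
  also have "\<dots> = (sqrt k * head_error)\<^sup>2"
    by (simp add: power_mult_distrib power2_eq_square)
  finally have "norm (block 1) * off_support_l1 \<le> sqrt k * head_error"
    by (rule power2_le_imp_le) (simp add: head_error_nonneg)
  moreover have "sqrt k * (sqrt \<alpha> * (norm (block 1) * tail_norm_sum)) \<le> norm (block 1) * off_support_l1"
    using mult_left_mono[OF tail_norm_sum_le norm_ge_zero[of "block 1"]] by (simp add: mult_ac)
  ultimately have "sqrt k * (sqrt \<alpha> * (norm (block 1) * tail_norm_sum)) \<le> sqrt k * head_error"
    by linarith
  then have "sqrt \<alpha> * (norm (block 1) * tail_norm_sum) \<le> head_error"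
    using k_pos by (simp add: mult_le_cancel_left_pos)
  then have "sqrt 2 * (sqrt \<alpha> * (norm (block 1) * tail_norm_sum)) \<le> sqrt 2 * head_error"
    by (rule mult_left_mono) simp
  also have "\<dots> \<le> 2 * head_error"
    using head_error_nonneg by (intro mult_right_mono) (simp_all add: sqrt2_less_2 less_imp_le)
  finally show ?thesis
    using sqrt_alpha_pos by (simp add: pos_le_divide_eq mult_ac)
qed

lemma tail_norm_sum_power2_le: "tail_norm_sum\<^sup>2 \<le> head_error / \<alpha>"
proof -
  have "k * (\<alpha> * tail_norm_sum\<^sup>2) = (sqrt \<alpha> * sqrt k * tail_norm_sum)\<^sup>2"
    using alpha_ge_1 by (simp add: power_mult_distrib mult_ac)
  also have "\<dots> \<le> off_support_l1\<^sup>2"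
    using tail_norm_sum_le tail_norm_sum_nonneg alpha_ge_1 by (intro power_mono) auto
  also have "\<dots> \<le> k * head_error"
    by (rule off_support_l1_power2_le)
  finally show ?thesis
    using k_pos alpha_ge_1 by (simp add: mult_le_cancel_left_pos pos_le_divide_eq mult.commute)
qed

lemma cross_bound_le: "cross_bound \<le> (4 / sqrt \<alpha> + 1 / \<alpha>) * head_error"
  using norm_block0_mult_tail_le norm_block1_mult_tail_le tail_norm_sum_power2_le
  unfolding cross_bound_def by (simp add: algebra_simps)

lemma outer_diff_decomp:
  "outer u - outer x = (outer head - outer x)
     + (\<Sum>j\<in>{2..CARD('n)}. outer2_sym (block 0) (block j))
     + (\<Sum>j\<in>{2..CARD('n)}. outer2_sym (block 1) (block j)) + outer tail"
  by (subst u_eq_head_tail)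
    (simp add: outer_add head_def tail_def outer2_sym_add_left outer2_sym_sum_right sum.distrib)

lemma norm_outer2_sym_blocks:
  "i \<noteq> j \<Longrightarrow> norm (outer2_sym (block i) (block j)) = sqrt 2 * (norm (block i) * norm (block j))"
  by (intro norm_outer2_sym_disjoint blocks_disjoint)

lemma norm_cross_sum_le:
  assumes "i < 2"
  shows "norm (\<Sum>j\<in>{2..CARD('n)}. outer2_sym (block i) (block j)) \<le> sqrt 2 * norm (block i) * tail_norm_sum"
proof -
  have "norm (\<Sum>j\<in>{2..CARD('n)}. outer2_sym (block i) (block j))
      \<le> (\<Sum>j\<in>{2..CARD('n)}. norm (outer2_sym (block i) (block j)))"
    by (rule norm_sum)
  also have "\<dots> = sqrt 2 * norm (block i) * tail_norm_sum"
    using assms by (simp add: norm_outer2_sym_blocks tail_norm_sum_def sum_distrib_left mult_ac)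
  finally show ?thesis .
qed

lemma norm_outer_diff_le: "norm (outer u - outer x) \<le> head_error + cross_bound"
proof -
  have "norm (outer tail) \<le> tail_norm_sum\<^sup>2"
  proof -
    have "norm tail \<le> tail_norm_sum"
      unfolding tail_def tail_norm_sum_def by (rule norm_sum)
    then have "(norm tail)\<^sup>2 \<le> tail_norm_sum\<^sup>2"
      by (rule power_mono) simp
    then show ?thesis
      by (simp add: outer_eq_outer2 norm_outer2 power2_eq_square)
  qed
  moreover have "norm (outer u - outer x) \<le> head_error
      + norm (\<Sum>j\<in>{2..CARD('n)}. outer2_sym (block 0) (block j))
      + norm (\<Sum>j\<in>{2..CARD('n)}. outer2_sym (block 1) (block j)) + norm (outer tail)"
    unfolding outer_diff_decomp head_error_def
    by (intro order_trans[OF norm_triangle_ineq] add_mono order_refl)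
  ultimately show ?thesis
    unfolding cross_bound_def using norm_cross_sum_le[of 0] norm_cross_sum_le[of 1] by simp
qed

lemma l1m_meas_outer2_sym_blocks_le:
  fixes a :: "'m::finite \<Rightarrow> complex^'n"
  assumes "RIP a 2 (2 * \<alpha> * k) c C"
  shows "l1m (meas a (outer2_sym (block i) (block j)))
    \<le> real CARD('m) * C * norm (outer2_sym (block i) (block j))"
  using block_nonzero by (intro RIP_upper_outer2_sym[OF assms card_two_blocks_le[of i j]]) auto

lemma RIP_C_nonneg:
  fixes a :: "'m::finite \<Rightarrow> complex^'n"
  assumes "RIP a 2 (2 * \<alpha> * k) c C"
  shows "0 \<le> C"
  using assms by (simp add: RIP_def)

lemma l1m_meas_cross_sum_le:
  fixes a :: "'m::finite \<Rightarrow> complex^'n"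
  assumes "RIP a 2 (2 * \<alpha> * k) c C" and "i < 2"
  shows "(\<Sum>j\<in>{2..CARD('n)}. l1m (meas a (outer2_sym (block i) (block j))))
    \<le> real CARD('m) * C * (sqrt 2 * norm (block i) * tail_norm_sum)"
proof -
  have "(\<Sum>j\<in>{2..CARD('n)}. l1m (meas a (outer2_sym (block i) (block j))))
      \<le> (\<Sum>j\<in>{2..CARD('n)}. real CARD('m) * C * (sqrt 2 * (norm (block i) * norm (block j))))"
    using assms(2) by (intro sum_mono)
      (simp add: l1m_meas_outer2_sym_blocks_le[OF assms(1)] norm_outer2_sym_blocks flip: norm_outer2_sym_blocks)
  also have "\<dots> = real CARD('m) * C * (sqrt 2 * norm (block i) * tail_norm_sum)"
    by (simp add: tail_norm_sum_def sum_distrib_left mult_ac)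
  finally show ?thesis .
qed

lemma l1m_meas_outer_tail_le:
  fixes a :: "'m::finite \<Rightarrow> complex^'n"
  assumes "RIP a 2 (2 * \<alpha> * k) c C"
  shows "l1m (meas a (outer tail)) \<le> real CARD('m) * C * tail_norm_sum\<^sup>2"
proof -
  let ?J = "{2..CARD('n)}"
  have "2 * l1m (meas a (outer tail)) = l1m (meas a (outer tail + outer tail))"
    by (simp only: linear_add[OF linear_meas] l1m_double)
  also have "\<dots> \<le> (\<Sum>i\<in>?J. \<Sum>j\<in>?J. l1m (meas a (outer2_sym (block i) (block j))))"
    unfolding tail_def outer_sum_double linear_sum[OF linear_meas]
    by (intro order_trans[OF l1m_sum_le] sum_mono l1m_sum_le)
  also have "\<dots> \<le> (\<Sum>i\<in>?J. \<Sum>j\<in>?J. real CARD('m) * C * (2 * (norm (block i) * norm (block j))))"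
    using RIP_C_nonneg[OF assms]
    by (intro sum_mono order_trans[OF l1m_meas_outer2_sym_blocks_le[OF assms]] mult_left_mono
        norm_outer2_sym_le) simp
  also have "\<dots> = 2 * (real CARD('m) * C * tail_norm_sum\<^sup>2)"
    by (simp add: tail_norm_sum_def power2_eq_square sum_product sum_distrib_left mult_ac)
  finally show ?thesis
    by simp
qed

lemma head_error_le_meas:
  fixes a :: "'m::finite \<Rightarrow> complex^'n"
  assumes "RIP a 2 (2 * \<alpha> * k) c C"
  shows "real CARD('m) * c * head_error
    \<le> l1m (meas a (outer u - outer x)) + real CARD('m) * C * cross_bound"
proof -
  let ?A = "meas a" and ?J = "{2..CARD('n)}"
  let ?X0 = "\<Sum>j\<in>?J. ?A (outer2_sym (block 0) (block j))"
    and ?X1 = "\<Sum>j\<in>?J. ?A (outer2_sym (block 1) (block j))"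
  have "real CARD('m) * c * head_error \<le> l1m (?A (outer head - outer x))"
    unfolding head_error_def
  proof (rule RIP_lower_outer_diff[OF assms card_two_blocks_le[of 0 1]])
    show "head $ i \<noteq> 0 \<Longrightarrow> i \<in> {i. bl i = 0} \<union> {i. bl i = 1}" for i
      using block_nonzero[of 0 i] block_nonzero[of 1 i]
      by (cases "block 0 $ i = 0") (auto simp: head_def)
    show "x $ i \<noteq> 0 \<Longrightarrow> i \<in> {i. bl i = 0} \<union> {i. bl i = 1}" for i
      by (simp add: block_zero_iff)
  qed
  also have "?A (outer head - outer x) = ?A (outer u - outer x) - ?X0 - ?X1 - ?A (outer tail)"
    by (simp add: outer_diff_decomp linear_add[OF linear_meas] linear_sum[OF linear_meas])
  also have "l1m \<dots> \<le> l1m (?A (outer u - outer x)) + l1m ?X0 + l1m ?X1 + l1m (?A (outer tail))"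
    by (intro order_trans[OF l1m_diff_le] add_mono order_refl)
  also have "\<dots> \<le> l1m (?A (outer u - outer x)) + real CARD('m) * C * cross_bound"
    using order_trans[OF l1m_sum_le l1m_meas_cross_sum_le[OF assms, of 0]]
      order_trans[OF l1m_sum_le l1m_meas_cross_sum_le[OF assms, of 1]]
      l1m_meas_outer_tail_le[OF assms]
    by (simp add: cross_bound_def algebra_simps)
  finally show ?thesis .
qed

end

lemma alpha_ge_1_of_RIP_constants:
  fixes c C \<alpha> :: real
  assumes "0 < c" and "c \<le> C" and "0 < \<alpha>" and "0 < c - 4 * C / sqrt \<alpha> - C / \<alpha>"
  shows "1 \<le> \<alpha>"
proof (rule ccontr)
  assume "\<not> 1 \<le> \<alpha>"
  then have "c * \<alpha> \<le> C"
    using assms(1,2) mult_left_le[of \<alpha> c] by linarith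
  then have "c \<le> C / \<alpha>"
    using assms(3) by (simp add: le_divide_eq)
  moreover have "0 \<le> 4 * C / sqrt \<alpha>"
    using assms(1-3) by simp
  ultimately show False
    using assms(4) by linarith
qed

lemma outer_error_le_meas:
  fixes a :: "'m::finite \<Rightarrow> complex^'n::finite" and x u :: "complex^'n"
    and k :: nat and \<alpha> c C :: real
  assumes "1 \<le> k" and "0 < \<alpha>" and "\<alpha> * real k \<in> \<nat>" and RIP: "RIP a 2 (2 * \<alpha> * real k) c C"
    and D_pos: "0 < c - 4 * C / sqrt \<alpha> - C / \<alpha>"
    and "l0 x \<le> k" and "l1 u \<le> l1 x"
  shows "norm (outer u - outer x) \<le> (1 / \<alpha> + 4 / sqrt \<alpha> + 1) / (c - 4 * C / sqrt \<alpha> - C / \<alpha>)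
    * (l1m (meas a (outer u - outer x)) / CARD('m))"
proof -
  have cC: "0 < c" "c \<le> C"
    using RIP by (auto simp: RIP_def)
  then have "1 \<le> \<alpha>"
    using assms(2) D_pos by (rule alpha_ge_1_of_RIP_constants)
  obtain K :: nat where K: "real K = \<alpha> * real k"
    using assms(3) by (metis Nats_cases)
  moreover have "1 \<le> \<alpha> * real k"
    using mult_mono[of 1 \<alpha> 1 "real k"] \<open>1 \<le> \<alpha>\<close> \<open>1 \<le> k\<close> by simp
  ultimately have "1 \<le> K"
    by simp
  then obtain bl where blocks: "sorted_blocks u {i. x$i \<noteq> 0} K bl"
    by (rule sorted_blocks_exist)
  interpret sparse_descent x u K bl k \<alpha>
    using assms \<open>1 \<le> \<alpha>\<close> K
    by (intro sparse_descent.intro sparse_descent_axioms.intro blocks) (simp_all add: l0_def)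
  let ?D = "c - 4 * C / sqrt \<alpha> - C / \<alpha>" and ?M = "l1m (meas a (outer u - outer x)) / CARD('m)"
  have "c * head_error \<le> ?M + C * cross_bound"
    using head_error_le_meas[OF RIP] by (simp add: field_simps)
  also have "C * cross_bound \<le> C * ((4 / sqrt \<alpha> + 1 / \<alpha>) * head_error)"
    using cross_bound_le cC by (intro mult_left_mono) auto
  finally have "head_error * ?D \<le> ?M"
    by (simp add: algebra_simps)
  then have F: "head_error \<le> ?M / ?D"
    using D_pos by (simp add: pos_le_divide_eq mult_ac)
  have "norm (outer u - outer x) \<le> (1 / \<alpha> + 4 / sqrt \<alpha> + 1) * head_error"
    using norm_outer_diff_le cross_bound_le by (simp add: algebra_simps)
  also have "\<dots> \<le> (1 / \<alpha> + 4 / sqrt \<alpha> + 1) * (?M / ?D)"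
    using F assms(2) by (intro mult_left_mono) auto
  finally show ?thesis
    by (simp add: divide_inverse mult_ac)
qed

lemma l1m_meas_noise_le:
  fixes a :: "'m::finite \<Rightarrow> complex^'n::finite"
  assumes "norm w \<le> \<epsilon>" and "norm (meas a (outer y) - (meas a (outer x) + w)) \<le> \<epsilon>"
  shows "l1m (meas a (outer y - outer x)) / CARD('m) \<le> 2 * \<epsilon> / sqrt (real CARD('m))"
proof -
  let ?m = "real CARD('m)"
  have "norm (meas a (outer y - outer x)) \<le> 2 * \<epsilon>"
    using norm_triangle_ineq[of "meas a (outer y) - (meas a (outer x) + w)" w] assms
    by (simp add: linear_diff[OF linear_meas])
  then have "l1m (meas a (outer y - outer x)) \<le> sqrt ?m * (2 * \<epsilon>)"
    using l1m_le_sqrt_card_norm[of "meas a (outer y - outer x)"]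
    by (simp add: order_trans[OF _ mult_left_mono])
  then have "l1m (meas a (outer y - outer x)) / ?m \<le> sqrt ?m * (2 * \<epsilon>) / ?m"
    by (simp add: divide_right_mono)
  also have "\<dots> = 2 * \<epsilon> / sqrt ?m"
    by (simp add: field_simps)
  finally show ?thesis .
qed

lemma phase_distance_le:
  fixes x y :: "complex^'n::finite"
  assumes "x \<noteq> 0" and "norm (outer y - outer x) \<le> B"
  shows "(INF \<gamma>\<in>{\<gamma>. cmod \<gamma> = 1}. norm (\<gamma> *s y - x)) \<le> min (sqrt 2 * B / norm x) (sqrt (2 * B))"
proof -
  obtain \<gamma> where \<gamma>: "cmod \<gamma> = 1"
    and close: "norm x * norm (x - \<gamma> *s y) \<le> sqrt 2 * norm (outer y - outer x)"
      "(norm (x - \<gamma> *s y))\<^sup>2 \<le> 2 * norm (outer y - outer x)"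
    using exists_phase_close[of y x] by blast
  have "(INF \<gamma>\<in>{\<gamma>. cmod \<gamma> = 1}. norm (\<gamma> *s y - x)) \<le> norm (\<gamma> *s y - x)"
    using \<gamma> by (intro cINF_lower bdd_belowI2[where m = 0]) simp_all
  then have "(INF \<gamma>\<in>{\<gamma>. cmod \<gamma> = 1}. norm (\<gamma> *s y - x)) \<le> norm (x - \<gamma> *s y)"
    by (simp add: norm_minus_commute)
  moreover have "norm x * norm (x - \<gamma> *s y) \<le> sqrt 2 * B"
    using close(1) assms(2) by (simp add: order_trans[OF _ mult_left_mono])
  then have "norm (x - \<gamma> *s y) \<le> sqrt 2 * B / norm x"
    using assms(1) by (simp add: pos_le_divide_eq mult.commute)
  moreover have "norm (x - \<gamma> *s y) \<le> sqrt (2 * B)"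
    using close(2) assms(2) by (simp add: real_le_rsqrt)
  ultimately show ?thesis
    by simp
qed

lemma sqrt_noise_bound_le:
  fixes C1 \<epsilon> m n :: real
  assumes "0 \<le> C1" and "0 \<le> \<epsilon>" and "0 < m" and "1 \<le> n"
  shows "sqrt (2 * (C1 * (2 * \<epsilon> / sqrt m))) \<le> 2 * sqrt (2 * sqrt 2 * C1) * sqrt \<epsilon> * (n / m) powr (1/4)"
proof -
  have "((n / m) powr (1/4))\<^sup>2 = (n / m) powr (1/4 + 1/4)"
    unfolding power2_eq_square powr_add by simp
  also have "\<dots> = sqrt n / sqrt m"
    using assms(3,4) by (simp add: powr_half_sqrt real_sqrt_divide)
  finally have quarter: "((n / m) powr (1/4))\<^sup>2 = sqrt n / sqrt m" .
  have "1 \<le> sqrt (2 * n)"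
    using assms(4) by simp
  then have "4 * (C1 * \<epsilon>) * 1 \<le> 4 * (C1 * \<epsilon>) * (2 * sqrt 2 * sqrt n)"
    using assms by (intro mult_left_mono) (simp_all add: real_sqrt_mult)
  then have "2 * (C1 * (2 * \<epsilon> / sqrt m)) \<le> 4 * (C1 * \<epsilon>) * (2 * sqrt 2 * sqrt n) / sqrt m"
    using divide_right_mono[OF _ real_sqrt_ge_zero[of m]] assms(3) by fastforce
  also have "\<dots> = 2\<^sup>2 * (sqrt (2 * sqrt 2 * C1))\<^sup>2 * (sqrt \<epsilon>)\<^sup>2 * ((n / m) powr (1/4))\<^sup>2"
    using assms by (simp add: quarter)
  also have "\<dots> = (2 * sqrt (2 * sqrt 2 * C1) * sqrt \<epsilon> * (n / m) powr (1/4))\<^sup>2"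
    by (simp only: power_mult_distrib)
  finally show ?thesis
    by (rule real_le_lsqrt[rotated]) (simp add: assms)
qed

lemma phase_distance_le_noise:
  fixes x y :: "complex^'n::finite" and C1 \<epsilon> m :: real
  assumes "x \<noteq> 0" and "0 \<le> C1" and "0 \<le> \<epsilon>" and "0 < m"
    and "norm (outer y - outer x) \<le> C1 * (2 * \<epsilon> / sqrt m)"
  shows "(INF \<gamma>\<in>{\<gamma>. cmod \<gamma> = 1}. norm (\<gamma> *s y - x))
    \<le> min (2 * sqrt 2 * C1 * \<epsilon> / (sqrt m * norm x))
          (2 * sqrt (2 * sqrt 2 * C1) * sqrt \<epsilon> * (real CARD('n) / m) powr (1/4))"
proof -
  have "(INF \<gamma>\<in>{\<gamma>. cmod \<gamma> = 1}. norm (\<gamma> *s y - x))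
      \<le> min (sqrt 2 * (C1 * (2 * \<epsilon> / sqrt m)) / norm x) (sqrt (2 * (C1 * (2 * \<epsilon> / sqrt m))))"
    by (rule phase_distance_le[OF assms(1,5)])
  also have "\<dots> \<le> min (2 * sqrt 2 * C1 * \<epsilon> / (sqrt m * norm x))
      (2 * sqrt (2 * sqrt 2 * C1) * sqrt \<epsilon> * (real CARD('n) / m) powr (1/4))"
  proof (rule min.mono)
    show "sqrt 2 * (C1 * (2 * \<epsilon> / sqrt m)) / norm x \<le> 2 * sqrt 2 * C1 * \<epsilon> / (sqrt m * norm x)"
      by (simp add: mult_ac)
    show "sqrt (2 * (C1 * (2 * \<epsilon> / sqrt m)))
        \<le> 2 * sqrt (2 * sqrt 2 * C1) * sqrt \<epsilon> * (real CARD('n) / m) powr (1/4)"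
      by (rule sqrt_noise_bound_le[OF assms(2-4)]) simp
  qed
  finally show ?thesis .
qed

theorem theorem2:
  fixes a :: "'m::finite \<Rightarrow> complex^'n::finite"
    and k :: nat and \<alpha> c C \<epsilon> :: real
    and x0 xs :: "complex^'n" and w :: "real^'m"
  assumes "k \<ge> 1" and "\<alpha> > 0" and "\<alpha> * real k \<in> \<nat>"
    and "RIP a 2 (2 * \<alpha> * real k) c C"
    and "c - 4 * C / sqrt \<alpha> - C / \<alpha> > 0"
    and "x0 \<noteq> 0" and "l0 x0 \<le> k"
    and "\<epsilon> \<ge> 0" and "norm w \<le> \<epsilon>"
    and "norm (meas a (outer xs) - (meas a (outer x0) + w)) \<le> \<epsilon>"
    and "\<And>x. norm (meas a (outer x) - (meas a (outer x0) + w)) \<le> \<epsilon> \<Longrightarrow> l1 xs \<le> l1 x"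
  shows "let C1 = (1 / \<alpha> + 4 / sqrt \<alpha> + 1) / (c - 4 * C / sqrt \<alpha> - C / \<alpha>) in
     frob (outer xs - outer x0) \<le> C1 * (2 * \<epsilon> / sqrt (real CARD('m))) \<and>
     (INF \<gamma>\<in>{\<gamma>::complex. cmod \<gamma> = 1}. norm (\<gamma> *s xs - x0))
       \<le> min (2 * sqrt 2 * C1 * \<epsilon> / (sqrt (real CARD('m)) * norm x0))
              (2 * sqrt (2 * sqrt 2 * C1) * sqrt \<epsilon> * (real CARD('n) / real CARD('m)) powr (1/4))"
proof -
  define C1 where "C1 = (1 / \<alpha> + 4 / sqrt \<alpha> + 1) / (c - 4 * C / sqrt \<alpha> - C / \<alpha>)"
  have C1: "0 \<le> C1"
    using assms(2,5) by (simp add: C1_def)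
  have "l1 xs \<le> l1 x0"
    using assms(11)[of x0] assms(9) by simp
  then have "norm (outer xs - outer x0) \<le> C1 * (l1m (meas a (outer xs - outer x0)) / CARD('m))"
    using outer_error_le_meas[OF assms(1-5,7)] by (simp add: C1_def)
  also have "\<dots> \<le> C1 * (2 * \<epsilon> / sqrt (real CARD('m)))"
    using l1m_meas_noise_le[OF assms(9,10)] C1 by (rule mult_left_mono)
  finally have error: "norm (outer xs - outer x0) \<le> C1 * (2 * \<epsilon> / sqrt (real CARD('m)))" .
  then show ?thesis
    using phase_distance_le_noise[OF assms(6) C1 assms(8) _ error]
    unfolding Let_def C1_def[symmetric] frob_eq_norm by simp
qed

end
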